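(* Let $k$ be an algebraically closed field of characteristic $0$ and $d\ge3$. For $m\ge1$ let $V_m$ have basis $v_1,\dots,v_m$ and symmetric $d$-linear form $\Theta_d(v_{i_1},\dots,v_{i_d})=1$ if $i_1+\dots+i_d=(d-1)m+1$ and $0$ otherwise, and $\mathcal{L}(m,d)=\{L\in\mathfrak{gl}(V_m):\sum_{i=1}^d\Theta_d(u_1,\dots,L(u_i),\dots,u_d)=0\ \forall u_j\}$. Fix $n\ge1$, let $\psi\in\mathrm{End}_k(V_n)$, $\psi(v_i)=v_{i-1}$ ($v_0=0$), and let $\mathcal{L}(n,d)^\psi$ be $\mathcal{L}(n,d)$ with Lie bracket $[f,g]_\psi=f\psi g-g\psi f$. Let $\iota:V_n\to V_{n+1}$, $\iota(v_i)=v_i$, and $\pi:V_{n+1}\to V_n$, $\pi(v_i)=v_{i-1}$ ($v_0=0$). Then $\rho(f)=\iota\circ f\circ\pi$ defines an injective Lie algebra homomorphism $\rho:\mathcal{L}(n,d)^\psi\to\mathcal{L}(n+1,d)$, where $\mathcal{L}(n+1,d)$ carries the commutator bracket.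
   Context: $\psi$ lies in the center of $(V_n,\Theta_d)$, so $[\cdot,\cdot]_\psi$ is a Lie bracket on $\mathcal{L}(n,d)$. *)

theory Defs
  imports "HOL-Computational_Algebra.Polynomial" "Jordan_Normal_Form.Matrix"
begin

text \<open>V_m is modelled as k^m (type 'k vec of dimension m); basis vector v_i (1 \<le> i \<le> m)
  is unit_vec m (i - 1), i.e. 0-based index i - 1. Endomorphisms of V_m are m x m matrices
  (column j-1 = image of v_j).\<close>

text \<open>The symmetric d-linear form Theta_d on V_m, as the multilinear extension of its values
  on basis vectors: Theta_d(v_{i_1},...,v_{i_d}) = 1 iff i_1+...+i_d = (d-1)m+1.
  The arguments are us 0, ..., us (d-1).\<close>
definition Theta :: "nat \<Rightarrow> nat \<Rightarrow> (nat \<Rightarrow> 'k::comm_ring_1 vec) \<Rightarrow> 'k" where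
  "Theta m d us =
     (\<Sum>idx \<in> PiE {..<d} (\<lambda>_. {..<m}).
        (if (\<Sum>j<d. idx j + 1) = (d - 1) * m + 1 then 1 else 0) * (\<Prod>j<d. us j $ idx j))"

definition Lmd :: "nat \<Rightarrow> nat \<Rightarrow> 'k::comm_ring_1 mat set" where
  "Lmd m d = {L \<in> carrier_mat m m.
     \<forall>us. (\<forall>j<d. us j \<in> carrier_vec m) \<longrightarrow>
          (\<Sum>i<d. Theta m d (us(i := L *\<^sub>v us i))) = 0}"

definition psi :: "nat \<Rightarrow> 'k::comm_ring_1 mat" where
  "psi n = mat n n (\<lambda>(i, j). if j = i + 1 then 1 else 0)"

definition iota :: "nat \<Rightarrow> 'k::comm_ring_1 mat" where
  "iota n = mat (n + 1) n (\<lambda>(i, j). if i = j then 1 else 0)"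

definition proj :: "nat \<Rightarrow> 'k::comm_ring_1 mat" where
  "proj n = mat n (n + 1) (\<lambda>(i, j). if j = i + 1 then 1 else 0)"

definition bracket_psi :: "nat \<Rightarrow> 'k::comm_ring_1 mat \<Rightarrow> 'k mat \<Rightarrow> 'k mat" where
  "bracket_psi n f g = f * psi n * g - g * psi n * f"

definition commutator :: "'k::comm_ring_1 mat \<Rightarrow> 'k mat \<Rightarrow> 'k mat" where
  "commutator f g = f * g - g * f"

definition rho :: "nat \<Rightarrow> 'k::comm_ring_1 mat \<Rightarrow> 'k mat" where
  "rho n f = iota n * f * proj n"

end

theory Submission
  imports Defs
begin

(* Since pi o iota = psi, one has rho f * rho g = iota (f psi g) pi, so rho turns the psi-bracket
   into the commutator; and rho f carries f as its block in rows 1..n and columns 2..n+1, so rho is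
   injective. That rho f lies in L(n+1,d) follows from
     Theta_{n+1}(u_1, ..., iota w, ..., u_d) = Theta_n(pi u_1, ..., w, ..., pi u_d).
   A basis term on the left survives only if the slot holding iota w has index at most n and all
   other slots have index at least 2: an index 1 elsewhere pushes the index sum down to at most
   (d-1)(n+1). Lowering those d-1 indices by one is a bijection onto the basis terms on the right,
   and it turns the condition "index sum = (d-1)(n+1)+1" into "index sum = (d-1)n+1". *)

lemma iota_carrier_mat [simp]: "iota n \<in> carrier_mat (n + 1) n"
  unfolding iota_def by simp

lemma proj_carrier_mat [simp]: "proj n \<in> carrier_mat n (n + 1)"
  unfolding proj_def by simp

lemma psi_carrier_mat [simp]: "psi n \<in> carrier_mat n n"
  unfolding psi_def by simp

lemma rho_carrier_mat: "f \<in> carrier_mat n n \<Longrightarrow> rho n f \<in> carrier_mat (n + 1) (n + 1)"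
  unfolding rho_def by (meson iota_carrier_mat proj_carrier_mat mult_carrier_mat)

lemma Lmd_subset_carrier_mat: "Lmd m d \<subseteq> carrier_mat m m"
  unfolding Lmd_def by blast

lemma index_iota_mult_vec:
  assumes "w \<in> carrier_vec n" and "a < n + 1"
  shows "(iota n *\<^sub>v w) $ a = (if a < n then w $ a else (0 :: 'k::comm_ring_1))"
  using assms unfolding iota_def
  by (auto simp: mult_mat_vec_def scalar_prod_def row_def if_distrib[of "\<lambda>x. x * _"] cong: if_cong)

lemma index_proj_mult_vec:
  assumes "u \<in> carrier_vec (n + 1)" and "b < n"
  shows "(proj n *\<^sub>v u) $ b = (u $ (b + 1) :: 'k::comm_ring_1)"
  using assms unfolding proj_def
  by (auto simp: mult_mat_vec_def scalar_prod_def row_def if_distrib[of "\<lambda>x. x * _"] cong: if_cong)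

lemma proj_mult_iota: "proj n * iota n = (psi n :: 'k::comm_ring_1 mat)"
  unfolding proj_def iota_def psi_def
  by (rule eq_matI) (auto simp: scalar_prod_def row_def col_def if_distrib[of "\<lambda>x. x * _"] cong: if_cong)

definition shift_except :: "nat \<Rightarrow> nat \<Rightarrow> (nat \<Rightarrow> nat) \<Rightarrow> nat \<Rightarrow> nat" where
  "shift_except d i x = restrict (\<lambda>j. if j = i then x j else x j + 1) {..<d}"

lemma shift_except_PiE:
  assumes "x \<in> PiE {..<d} (\<lambda>_. {..<n})"
  shows "shift_except d i x \<in> PiE {..<d} (\<lambda>_. {..<n + 1})"
  using PiE_mem[OF assms] unfolding shift_except_def restrict_PiE_iff by (simp add: less_SucI)

lemma inj_on_shift_except: "inj_on (shift_except d i) (PiE {..<d} A)"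
proof (rule inj_onI)
  fix x y assume x: "x \<in> PiE {..<d} A" and y: "y \<in> PiE {..<d} A"
    and eq: "shift_except d i x = shift_except d i y"
  show "x = y"
  proof (rule PiE_ext[OF x y])
    fix j assume "j \<in> {..<d}"
    then show "x j = y j"
      using fun_cong[OF eq, of j] by (auto simp: shift_except_def split: if_splits)
  qed
qed

lemma sum_shift_except:
  assumes "i < d"
  shows "(\<Sum>j<d. shift_except d i x j + 1) = (\<Sum>j<d. x j + 1) + (d - 1)"
proof -
  have "(\<Sum>j<d. shift_except d i x j + 1) = (\<Sum>j<d. (x j + 1) + (if j = i then 0 else 1))"
    by (rule sum.cong) (auto simp: shift_except_def)
  also have "\<dots> = (\<Sum>j<d. x j + 1) + (\<Sum>j<d. if j = i then 0 else 1)"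
    by (simp only: sum.distrib)
  also have "(\<Sum>j<d. if j = i then 0 else 1) = d - 1"
    using assms by (simp add: sum.If_cases Diff_eq[symmetric])
  finally show ?thesis .
qed

lemma sum_indices_le_if_zero:
  fixes x :: "nat \<Rightarrow> nat"
  assumes "i < d" "j < d" "j \<noteq> i" "x i < n" "x j = 0" "\<forall>k<d. x k \<le> n"
  shows "(\<Sum>k<d. x k + 1) \<le> (d - 1) * (n + 1)"
proof -
  have "(\<Sum>k<d. x k + 1) = (x i + 1) + (x j + 1) + (\<Sum>k\<in>{..<d} - {i} - {j}. x k + 1)"
    using assms(1-3) by (simp add: sum.remove[of _ i] sum.remove[of _ j])
  also have "(\<Sum>k\<in>{..<d} - {i} - {j}. x k + 1) \<le> card ({..<d} - {i} - {j}) * (n + 1)"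
    using assms(6) sum_bounded_above[of "{..<d} - {i} - {j}" "\<lambda>k. x k + 1" "n + 1"] by auto
  also have "card ({..<d} - {i} - {j}) = d - 2"
    using assms(1-3) by simp
  finally have "(\<Sum>k<d. x k + 1) \<le> (n + 1) + (d - 2) * (n + 1)"
    using assms(4,5) by simp
  also have "\<dots> = ((d - 2) + 1) * (n + 1)"
    by simp
  also have "(d - 2) + 1 = d - 1"
    using assms(1-3) by linarith
  finally show ?thesis .
qed

lemma PiE_diff_image_shift_except:
  assumes x: "x \<in> PiE {..<d} (\<lambda>_. {..<n + 1}) - shift_except d i ` PiE {..<d} (\<lambda>_. {..<n})"
    and "i < d"
  shows "x i = n \<or> (\<exists>j<d. j \<noteq> i \<and> x j = 0)"
proof (rule ccontr)
  assume "\<not> ?thesis"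
  then have xi: "x i < n" and nonzero: "\<And>j. j < d \<Longrightarrow> j \<noteq> i \<Longrightarrow> x j \<noteq> 0"
    using x \<open>i < d\<close> by (auto simp: PiE_iff less_Suc_eq)
  define y where "y = restrict (\<lambda>j. if j = i then x j else x j - 1) {..<d}"
  have "y \<in> PiE {..<d} (\<lambda>_. {..<n})"
    using PiE_mem[of x "{..<d}" "\<lambda>_. {..<n + 1}"] x xi unfolding y_def restrict_PiE_iff by force
  moreover have "shift_except d i y = x"
    using x nonzero by (intro ext) (auto simp: shift_except_def y_def PiE_iff extensional_def)
  ultimately show False
    using x by blast
qed

definition Theta_term :: "nat \<Rightarrow> nat \<Rightarrow> (nat \<Rightarrow> 'k::comm_ring_1 vec) \<Rightarrow> (nat \<Rightarrow> nat) \<Rightarrow> 'k" where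
  "Theta_term m d us idx =
     (if (\<Sum>j<d. idx j + 1) = (d - 1) * m + 1 then 1 else 0) * (\<Prod>j<d. us j $ idx j)"

lemma Theta_eq_sum_Theta_term: "Theta m d us = sum (Theta_term m d us) (PiE {..<d} (\<lambda>_. {..<m}))"
  unfolding Theta_def Theta_term_def ..

lemma Theta_term_update_iota_eq_0:
  fixes w :: "'k::comm_ring_1 vec"
  assumes w: "w \<in> carrier_vec n" and i: "i < d"
    and x: "x \<in> PiE {..<d} (\<lambda>_. {..<n + 1}) - shift_except d i ` PiE {..<d} (\<lambda>_. {..<n})"
  shows "Theta_term (n + 1) d (us(i := iota n *\<^sub>v w)) x = 0"
proof (cases "x i = n")
  case True
  then have "(us(i := iota n *\<^sub>v w)) i $ x i = 0"
    using index_iota_mult_vec[OF w, of n] by simp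
  then have "(\<Prod>j<d. (us(i := iota n *\<^sub>v w)) j $ x j) = 0"
    using i by (intro prod_zero) auto
  then show ?thesis
    unfolding Theta_term_def by simp
next
  case False
  have x_le: "\<forall>k<d. x k \<le> n"
    using x PiE_mem[of x "{..<d}" "\<lambda>_. {..<n + 1}"] by fastforce
  obtain j where j: "j < d" "j \<noteq> i" "x j = 0"
    using PiE_diff_image_shift_except[OF x i] False by blast
  have "x i < n"
    using False x_le i by force
  then have "(\<Sum>k<d. x k + 1) \<le> (d - 1) * (n + 1)"
    by (rule sum_indices_le_if_zero[OF i j(1,2) _ j(3) x_le])
  then show ?thesis
    unfolding Theta_term_def by simp
qed

lemma Theta_term_update_iota_shift_except:
  fixes w :: "'k::comm_ring_1 vec"
  assumes w: "w \<in> carrier_vec n"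
    and us: "\<And>j. j < d \<Longrightarrow> us j \<in> carrier_vec (n + 1)"
    and i: "i < d" and x: "x \<in> PiE {..<d} (\<lambda>_. {..<n})"
  shows "Theta_term (n + 1) d (us(i := iota n *\<^sub>v w)) (shift_except d i x)
    = Theta_term n d ((\<lambda>j. proj n *\<^sub>v us j)(i := w)) x"
proof -
  have x_lt: "x k < n" if "k < d" for k
    using PiE_mem[OF x] that by simp
  have "(\<Sum>j<d. shift_except d i x j + 1) = (d - 1) * (n + 1) + 1
      \<longleftrightarrow> (\<Sum>j<d. x j + 1) = (d - 1) * n + 1"
    unfolding sum_shift_except[OF i] by (simp add: distrib_left)
  moreover have "(\<Prod>j<d. (us(i := iota n *\<^sub>v w)) j $ shift_except d i x j)
      = (\<Prod>j<d. ((\<lambda>j. proj n *\<^sub>v us j)(i := w)) j $ x j)"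
  proof (rule prod.cong)
    fix j assume "j \<in> {..<d}"
    then show "(us(i := iota n *\<^sub>v w)) j $ shift_except d i x j
        = ((\<lambda>j. proj n *\<^sub>v us j)(i := w)) j $ x j"
      using x_lt[of j] index_iota_mult_vec[OF w, of "x j"] index_proj_mult_vec[OF us, of j "x j"]
      by (auto simp: shift_except_def)
  qed simp
  ultimately show ?thesis
    unfolding Theta_term_def by simp
qed

lemma Theta_update_iota:
  fixes w :: "'k::comm_ring_1 vec"
  assumes w: "w \<in> carrier_vec n"
    and us: "\<And>j. j < d \<Longrightarrow> us j \<in> carrier_vec (n + 1)"
    and i: "i < d"
  shows "Theta (n + 1) d (us(i := iota n *\<^sub>v w)) = Theta n d ((\<lambda>j. proj n *\<^sub>v us j)(i := w))"
proof -
  let ?A = "PiE {..<d} (\<lambda>_. {..<n + 1})" and ?B = "PiE {..<d} (\<lambda>_. {..<n})"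
  let ?F = "Theta_term (n + 1) d (us(i := iota n *\<^sub>v w))"
  have "Theta (n + 1) d (us(i := iota n *\<^sub>v w)) = sum ?F ?A"
    by (rule Theta_eq_sum_Theta_term)
  also have "\<dots> = sum ?F (shift_except d i ` ?B)"
  proof (rule sum.mono_neutral_right)
    show "finite ?A"
      by (simp add: finite_PiE)
    show "shift_except d i ` ?B \<subseteq> ?A"
      using shift_except_PiE by blast
  qed (use Theta_term_update_iota_eq_0[OF w i] in blast)
  also have "\<dots> = sum (?F \<circ> shift_except d i) ?B"
    by (rule sum.reindex[OF inj_on_shift_except])
  also have "\<dots> = Theta n d ((\<lambda>j. proj n *\<^sub>v us j)(i := w))"
    unfolding Theta_eq_sum_Theta_term
    using Theta_term_update_iota_shift_except[OF w us i] by (intro sum.cong) auto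
  finally show ?thesis .
qed

lemma rho_mult_vec:
  assumes f: "f \<in> carrier_mat n n" and u: "u \<in> carrier_vec (n + 1)"
  shows "rho n f *\<^sub>v u = iota n *\<^sub>v (f *\<^sub>v (proj n *\<^sub>v u))"
proof -
  have "rho n f *\<^sub>v u = (iota n * f) *\<^sub>v (proj n *\<^sub>v u)"
    unfolding rho_def
    by (rule assoc_mult_mat_vec[OF mult_carrier_mat[OF iota_carrier_mat f] proj_carrier_mat u])
  also have "\<dots> = iota n *\<^sub>v (f *\<^sub>v (proj n *\<^sub>v u))"
    by (rule assoc_mult_mat_vec[OF iota_carrier_mat f mult_mat_vec_carrier[OF proj_carrier_mat u]])
  finally show ?thesis .
qed

lemma rho_mem_Lmd:
  assumes f: "f \<in> Lmd n d"
  shows "rho n f \<in> Lmd (n + 1) d"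
proof -
  have f_carrier: "f \<in> carrier_mat n n"
    and f_invariant: "\<And>vs. \<forall>j<d. vs j \<in> carrier_vec n \<Longrightarrow> (\<Sum>i<d. Theta n d (vs(i := f *\<^sub>v vs i))) = 0"
    using f unfolding Lmd_def by auto
  have "(\<Sum>i<d. Theta (n + 1) d (us(i := rho n f *\<^sub>v us i))) = 0"
    if us: "\<forall>j<d. us j \<in> carrier_vec (n + 1)" for us
  proof -
    define vs where "vs = (\<lambda>j. proj n *\<^sub>v us j)"
    have vs: "\<forall>j<d. vs j \<in> carrier_vec n"
      unfolding vs_def using us mult_mat_vec_carrier[OF proj_carrier_mat] by blast
    have "Theta (n + 1) d (us(i := rho n f *\<^sub>v us i)) = Theta n d (vs(i := f *\<^sub>v vs i))"
      if i: "i < d" for i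
    proof -
      have "rho n f *\<^sub>v us i = iota n *\<^sub>v (f *\<^sub>v vs i)"
        unfolding vs_def using f_carrier us i by (simp add: rho_mult_vec)
      moreover have "f *\<^sub>v vs i \<in> carrier_vec n"
        using f_carrier vs i by simp
      ultimately show ?thesis
        unfolding vs_def using Theta_update_iota us i by metis
    qed
    then have "(\<Sum>i<d. Theta (n + 1) d (us(i := rho n f *\<^sub>v us i)))
        = (\<Sum>i<d. Theta n d (vs(i := f *\<^sub>v vs i)))"
      by simp
    also have "\<dots> = 0"
      using f_invariant vs by blast
    finally show ?thesis .
  qed
  then show ?thesis
    using rho_carrier_mat[OF f_carrier] unfolding Lmd_def by blast
qed

lemma rho_add:
  fixes f g :: "'k::comm_ring_1 mat"
  assumes f: "f \<in> carrier_mat n n" and g: "g \<in> carrier_mat n n"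
  shows "rho n (f + g) = rho n f + rho n g"
proof -
  have "iota n * (f + g) = iota n * f + iota n * g"
    by (rule mult_add_distrib_mat[OF iota_carrier_mat f g])
  then show ?thesis
    unfolding rho_def using add_mult_distrib_mat[OF mult_carrier_mat[OF iota_carrier_mat f]
        mult_carrier_mat[OF iota_carrier_mat g] proj_carrier_mat] by simp
qed

lemma rho_minus:
  fixes f g :: "'k::comm_ring_1 mat"
  assumes f: "f \<in> carrier_mat n n" and g: "g \<in> carrier_mat n n"
  shows "rho n (f - g) = rho n f - rho n g"
proof -
  have "iota n * (f - g) = iota n * f - iota n * g"
    by (rule mult_minus_distrib_mat[OF iota_carrier_mat f g])
  then show ?thesis
    unfolding rho_def using minus_mult_distrib_mat[OF mult_carrier_mat[OF iota_carrier_mat f]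
        mult_carrier_mat[OF iota_carrier_mat g] proj_carrier_mat] by simp
qed

lemma rho_smult:
  fixes f :: "'k::comm_ring_1 mat"
  assumes f: "f \<in> carrier_mat n n"
  shows "rho n (a \<cdot>\<^sub>m f) = a \<cdot>\<^sub>m rho n f"
  unfolding rho_def mult_smult_distrib[OF iota_carrier_mat f]
  by (rule mult_smult_assoc_mat[OF mult_carrier_mat[OF iota_carrier_mat f] proj_carrier_mat])

lemma rho_mult_rho:
  fixes f g :: "'k::comm_ring_1 mat"
  assumes f: "f \<in> carrier_mat n n" and g: "g \<in> carrier_mat n n"
  shows "rho n f * rho n g = rho n (f * psi n * g)"
proof -
  have iota_f: "iota n * f \<in> carrier_mat (n + 1) n"
    using mult_carrier_mat[OF iota_carrier_mat f] .
  have iota_g: "iota n * g \<in> carrier_mat (n + 1) n"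
    using mult_carrier_mat[OF iota_carrier_mat g] .
  have f_psi: "f * psi n \<in> carrier_mat n n"
    using mult_carrier_mat[OF f psi_carrier_mat] .
  have "rho n f * rho n g = iota n * f * proj n * (iota n * g) * proj n"
    unfolding rho_def
    by (rule assoc_mult_mat[symmetric, OF rho_carrier_mat[OF f, unfolded rho_def] iota_g proj_carrier_mat])
  also have "iota n * f * proj n * (iota n * g) = iota n * f * proj n * iota n * g"
    by (rule assoc_mult_mat[symmetric, OF rho_carrier_mat[OF f, unfolded rho_def] iota_carrier_mat g])
  also have "iota n * f * proj n * iota n = iota n * f * psi n"
    unfolding proj_mult_iota[symmetric] by (rule assoc_mult_mat[OF iota_f proj_carrier_mat iota_carrier_mat])
  also have "iota n * f * psi n = iota n * (f * psi n)"
    by (rule assoc_mult_mat[OF iota_carrier_mat f psi_carrier_mat])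
  also have "iota n * (f * psi n) * g = iota n * (f * psi n * g)"
    by (rule assoc_mult_mat[OF iota_carrier_mat f_psi g])
  finally show ?thesis
    unfolding rho_def .
qed

lemma rho_bracket_psi:
  fixes f g :: "'k::comm_ring_1 mat"
  assumes f: "f \<in> carrier_mat n n" and g: "g \<in> carrier_mat n n"
  shows "rho n (bracket_psi n f g) = commutator (rho n f) (rho n g)"
proof -
  have "f * psi n * g \<in> carrier_mat n n" and "g * psi n * f \<in> carrier_mat n n"
    using f g by (auto intro: mult_carrier_mat[of _ n n])
  then show ?thesis
    unfolding bracket_psi_def commutator_def by (simp add: rho_minus rho_mult_rho f g)
qed

lemma index_rho_Suc:
  assumes "f \<in> carrier_mat n n" and "i < n" and "j < n"
  shows "rho n f $$ (i, j + 1) = (f $$ (i, j) :: 'k::comm_ring_1)"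
proof -
  have "rho n f $$ (i, j + 1) = row (iota n * f) i \<bullet> col (proj n) (j + 1)"
    unfolding rho_def using assms mult_carrier_mat[OF iota_carrier_mat]
    by (intro index_mult_mat(1)) (auto simp: iota_def proj_def)
  also have "col (proj n) (j + 1) = unit_vec n j"
    unfolding proj_def using assms by (auto simp: unit_vec_def)
  also have "row (iota n * f) i = row f i"
    using assms by (intro eq_vecI)
      (auto simp: iota_def scalar_prod_def col_def if_distrib[of "\<lambda>x. x * _"] cong: if_cong)
  finally show ?thesis
    using assms by simp
qed

lemma inj_on_rho: "inj_on (rho n) (carrier_mat n n :: 'k::comm_ring_1 mat set)"
proof (rule inj_onI)
  fix f g :: "'k mat"
  assume f: "f \<in> carrier_mat n n" and g: "g \<in> carrier_mat n n" and eq: "rho n f = rho n g"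
  show "f = g"
  proof (rule eq_matI)
    fix i j assume "i < dim_row g" and "j < dim_col g"
    then show "f $$ (i, j) = g $$ (i, j)"
      using index_rho_Suc[OF f] index_rho_Suc[OF g] eq g by auto
  qed (use f g in auto)
qed

theorem proposition3p8:
  fixes n d :: nat
  assumes "d \<ge> 3" and "n \<ge> 1"
  shows "(\<forall>f \<in> (Lmd n d :: 'k :: {alg_closed_field, field_char_0} mat set).
            rho n f \<in> Lmd (n + 1) d)
    \<and> (\<forall>f \<in> (Lmd n d :: 'k mat set). \<forall>g \<in> Lmd n d. \<forall>a b :: 'k.
          rho n (a \<cdot>\<^sub>m f + b \<cdot>\<^sub>m g) = a \<cdot>\<^sub>m rho n f + b \<cdot>\<^sub>m rho n g)
    \<and> (\<forall>f \<in> (Lmd n d :: 'k mat set). \<forall>g \<in> Lmd n d.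
          rho n (bracket_psi n f g) = commutator (rho n f) (rho n g))
    \<and> inj_on (rho n) (Lmd n d :: 'k mat set)"
proof (intro conjI ballI allI)
  fix f g :: "'k mat" and a b :: 'k
  assume f: "f \<in> Lmd n d" and g: "g \<in> Lmd n d"
  then have f_carrier: "f \<in> carrier_mat n n" and g_carrier: "g \<in> carrier_mat n n"
    using Lmd_subset_carrier_mat by auto
  show "rho n f \<in> Lmd (n + 1) d"
    using f by (rule rho_mem_Lmd)
  show "rho n (a \<cdot>\<^sub>m f + b \<cdot>\<^sub>m g) = a \<cdot>\<^sub>m rho n f + b \<cdot>\<^sub>m rho n g"
    using f_carrier g_carrier by (simp add: rho_add rho_smult)
  show "rho n (bracket_psi n f g) = commutator (rho n f) (rho n g)"
    using f_carrier g_carrier by (rule rho_bracket_psi)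
next
  show "inj_on (rho n) (Lmd n d :: 'k mat set)"
    using inj_on_rho Lmd_subset_carrier_mat by (rule inj_on_subset)
qed

end
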